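(* Let $X$ be a complex Banach space and let $A:\mathcal{D}(\mathbb{R})\to L(X)$ be a linear map which is multiplicative, i.e. $A(\phi\psi)=A(\phi)A(\psi)$ for all $\phi,\psi\in\mathcal{D}(\mathbb{R})$ (no continuity is assumed). Then for every $\chi\in\mathcal{D}(\mathbb{R})$ the function $$\mathbb{C}\setminus\mathbb{R}\ni z\longmapsto A\Big(\xi\mapsto \frac{\chi(\xi)}{z-\xi}\Big)\in L(X)$$ is strongly holomorphic on $\mathbb{C}\setminus\mathbb{R}$.
   Context: $L(X)$ denotes the algebra of bounded linear operators on $X$ with the operator norm; $\mathcal{D}(\mathbb{R})=C_c^\infty(\mathbb{R})$ (complex-valued). For $z\notin\mathbb{R}$ the function $\xi\mapsto\chi(\xi)/(z-\xi)$ belongs to $\mathcal{D}(\mathbb{R})$. "Strongly holomorphic" means holomorphic as an $L(X)$-valued function (complex differentiable with respect to the operator norm). *)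

theory Defs
  imports "HOL-Analysis.Analysis"
begin

text \<open>A complex Banach space is modelled as a real Banach space (type class banach)
  together with a complex scalar multiplication extending the real one and
  satisfying the complex vector space and norm axioms.\<close>

definition complex_structure :: "(complex \<Rightarrow> 'a::banach \<Rightarrow> 'a) \<Rightarrow> bool" where
  "complex_structure cm \<longleftrightarrow>
     (\<forall>x. cm 1 x = x) \<and>
     (\<forall>a b x. cm (a * b) x = cm a (cm b x)) \<and>
     (\<forall>a b x. cm (a + b) x = cm a x + cm b x) \<and>
     (\<forall>a x y. cm a (x + y) = cm a x + cm a y) \<and>
     (\<forall>r x. cm (complex_of_real r) x = r *\<^sub>R x) \<and>
     (\<forall>a x. norm (cm a x) = cmod a * norm x)"

text \<open>L(X): bounded operators that are complex linear.\<close>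
definition bounded_ops :: "(complex \<Rightarrow> 'a::banach \<Rightarrow> 'a) \<Rightarrow> ('a \<Rightarrow>\<^sub>L 'a) set" where
  "bounded_ops cm = {T. \<forall>a x. blinfun_apply T (cm a x) = cm a (blinfun_apply T x)}"

definition op_scale :: "(complex \<Rightarrow> 'a::banach \<Rightarrow> 'a) \<Rightarrow> complex \<Rightarrow> ('a \<Rightarrow>\<^sub>L 'a) \<Rightarrow> ('a \<Rightarrow>\<^sub>L 'a)" where
  "op_scale cm c T = Blinfun (\<lambda>x. cm c (blinfun_apply T x))"

definition smooth_fun :: "(real \<Rightarrow> complex) \<Rightarrow> bool" where
  "smooth_fun \<phi> \<longleftrightarrow> (\<exists>D :: nat \<Rightarrow> real \<Rightarrow> complex. D 0 = \<phi> \<and>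
      (\<forall>n x. (D n has_vector_derivative D (Suc n) x) (at x)))"

definition test_fun :: "(real \<Rightarrow> complex) \<Rightarrow> bool" where
  "test_fun \<phi> \<longleftrightarrow> smooth_fun \<phi> \<and> compact (closure {x. \<phi> x \<noteq> 0})"

definition op_holomorphic_on ::
  "(complex \<Rightarrow> 'a::banach \<Rightarrow> 'a) \<Rightarrow> (complex \<Rightarrow> ('a \<Rightarrow>\<^sub>L 'a)) \<Rightarrow> complex set \<Rightarrow> bool" where
  "op_holomorphic_on cm F S \<longleftrightarrow>
     (\<forall>z\<in>S. \<exists>D. ((\<lambda>w. op_scale cm (1 / (w - z)) (F w - F z)) \<longlongrightarrow> D) (at z within S))"

end

theory Submission
  imports Defs "HOL-Computational_Algebra.Polynomial"
begin

text \<open>For Im z, Im w \<noteq> 0 put f_z(\<xi>) = \<chi>(\<xi>)/(z - \<xi>) and choose a test function \<psi> with \<psi> = 1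
  on the support of \<chi>. Then f_z = f_w + (w - z) g_z f_w with g_z(\<xi>) = \<psi>(\<xi>)/(z - \<xi>), all three
  being test functions, so additivity, homogeneity and multiplicativity of A give the resolvent
  identity A f_z = A f_w + (w - z) A g_z A f_w. This identity alone forces continuity of
  z \<mapsto> A f_z in operator norm (for w near z the perturbation term is at most half of A f_w), and then
  the difference quotients -A g_z A f_w converge to -A g_z A f_z. No continuity of A is needed, and
  neither is the complex linearity of its values.\<close>

section \<open>Smooth functions\<close>

lemma smooth_funI_coinduct:
  assumes "P \<phi>"
    and step: "\<And>f. P f \<Longrightarrow> \<exists>f'. (\<forall>x. (f has_vector_derivative f' x) (at x)) \<and> P f'"
  shows "smooth_fun \<phi>"
proof -
  define next_deriv where
    "next_deriv f = (SOME f'. (\<forall>x. (f has_vector_derivative f' x) (at x)) \<and> P f')" for f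
  have next_deriv: "(\<forall>x. (f has_vector_derivative next_deriv f x) (at x)) \<and> P (next_deriv f)"
    if "P f" for f
    unfolding next_deriv_def using someI_ex[OF step[OF that]] .
  define D where "D n = (next_deriv ^^ n) \<phi>" for n
  have "P (D n)" for n
    by (induction n) (simp_all add: D_def assms(1) next_deriv)
  then have "(D n has_vector_derivative D (Suc n) x) (at x)" for n x
    using next_deriv by (simp add: D_def)
  then show ?thesis
    unfolding smooth_fun_def by (intro exI[of _ D]) (simp add: D_def)
qed

lemma smooth_fun_derivative:
  assumes "smooth_fun f"
  obtains f' where "\<And>x. (f has_vector_derivative f' x) (at x)" and "smooth_fun f'"
proof -
  obtain D where D: "D 0 = f" "\<And>n x. (D n has_vector_derivative D (Suc n) x) (at x)"
    using assms unfolding smooth_fun_def by blast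
  have "smooth_fun (D (Suc 0))"
    unfolding smooth_fun_def by (intro exI[of _ "\<lambda>n. D (Suc n)"]) (simp add: D)
  with D show ?thesis using that by blast
qed

lemma smooth_fun_const: "smooth_fun (\<lambda>x. c)"
  unfolding smooth_fun_def
  by (intro exI[of _ "\<lambda>n. if n = 0 then (\<lambda>x. c) else (\<lambda>x. 0)"]) auto

lemma smooth_fun_of_real: "smooth_fun complex_of_real"
proof (rule smooth_funI_coinduct[where P = "\<lambda>f. f = complex_of_real \<or> (\<exists>c. f = (\<lambda>x. c))"])
  fix f :: "real \<Rightarrow> complex"
  assume "f = complex_of_real \<or> (\<exists>c. f = (\<lambda>x. c))"
  then show "\<exists>f'. (\<forall>x. (f has_vector_derivative f' x) (at x)) \<and>
      (f' = complex_of_real \<or> (\<exists>c. f' = (\<lambda>x. c)))"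
  proof
    assume "f = complex_of_real"
    then have "(f has_vector_derivative 1) (at x)" for x
      using has_vector_derivative_of_real[OF DERIV_ident] by simp
    then show ?thesis by (intro exI[of _ "\<lambda>x. 1"]) blast
  qed (auto intro: has_vector_derivative_const)
qed simp

text \<open>The derivative of an inverse involves the inverse again, so closure of smooth functions under
  sums, products and inverses has to be proved simultaneously: the generated class is closed under
  differentiation and therefore smooth by coinduction.\<close>

inductive_set smooth_generated :: "(real \<Rightarrow> complex) set" where
  smooth: "smooth_fun f \<Longrightarrow> f \<in> smooth_generated"
| add: "f \<in> smooth_generated \<Longrightarrow> g \<in> smooth_generated \<Longrightarrow> (\<lambda>x. f x + g x) \<in> smooth_generated"
| mult: "f \<in> smooth_generated \<Longrightarrow> g \<in> smooth_generated \<Longrightarrow> (\<lambda>x. f x * g x) \<in> smooth_generated"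
| inverse: "f \<in> smooth_generated \<Longrightarrow> (\<forall>x. f x \<noteq> 0) \<Longrightarrow> (\<lambda>x. inverse (f x)) \<in> smooth_generated"

lemma smooth_generated_derivative:
  assumes "f \<in> smooth_generated"
  shows "\<exists>f'. (\<forall>x. (f has_vector_derivative f' x) (at x)) \<and> f' \<in> smooth_generated"
  using assms
proof induction
  case (smooth f)
  then show ?case
    by (metis smooth_fun_derivative smooth_generated.smooth)
next
  case (add f g)
  then obtain f' g' where "\<forall>x. (f has_vector_derivative f' x) (at x)" "f' \<in> smooth_generated"
      and "\<forall>x. (g has_vector_derivative g' x) (at x)" "g' \<in> smooth_generated"
    by blast
  then show ?case
    by (intro exI[of _ "\<lambda>x. f' x + g' x"]) (simp add: has_vector_derivative_add smooth_generated.add)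
next
  case (mult f g)
  then obtain f' g' where "\<forall>x. (f has_vector_derivative f' x) (at x)" "f' \<in> smooth_generated"
      and "\<forall>x. (g has_vector_derivative g' x) (at x)" "g' \<in> smooth_generated"
    by blast
  with mult.hyps show ?case
    by (intro exI[of _ "\<lambda>x. f x * g' x + f' x * g x"])
      (simp add: has_vector_derivative_mult smooth_generated.add smooth_generated.mult)
next
  case (inverse f)
  then obtain f' where f': "\<forall>x. (f has_vector_derivative f' x) (at x)" "f' \<in> smooth_generated"
    by blast
  define q where "q x = f' x * (- 1 * (inverse (f x) * inverse (f x)))" for x
  have "((\<lambda>x. inverse (f x)) has_vector_derivative q x) (at x)" for x
    using field_vector_diff_chain_at[OF f'(1)[rule_format] DERIV_inverse[OF inverse.hyps(2)[rule_format]]]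
    by (simp add: q_def o_def power2_eq_square)
  moreover have "q \<in> smooth_generated"
  proof -
    have "(\<lambda>x. - 1) \<in> smooth_generated"
      by (rule smooth_generated.smooth[OF smooth_fun_const])
    moreover have "(\<lambda>x. inverse (f x)) \<in> smooth_generated"
      using inverse.hyps by (rule smooth_generated.inverse)
    ultimately show ?thesis
      unfolding q_def using f'(2) by (intro smooth_generated.mult) assumption+
  qed
  ultimately show ?case by blast
qed

lemma smooth_generated_smooth: "f \<in> smooth_generated \<Longrightarrow> smooth_fun f"
  by (rule smooth_funI_coinduct[where P = "\<lambda>f. f \<in> smooth_generated"])
    (simp_all add: smooth_generated_derivative)

lemma smooth_fun_add: "smooth_fun f \<Longrightarrow> smooth_fun g \<Longrightarrow> smooth_fun (\<lambda>x. f x + g x)"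
  by (metis smooth_generated.add smooth_generated.smooth smooth_generated_smooth)

lemma smooth_fun_mult: "smooth_fun f \<Longrightarrow> smooth_fun g \<Longrightarrow> smooth_fun (\<lambda>x. f x * g x)"
  by (metis smooth_generated.mult smooth_generated.smooth smooth_generated_smooth)

lemma smooth_fun_inverse:
  "smooth_fun f \<Longrightarrow> (\<And>x. f x \<noteq> 0) \<Longrightarrow> smooth_fun (\<lambda>x. inverse (f x))"
  by (metis smooth_generated.inverse smooth_generated.smooth smooth_generated_smooth)

lemma smooth_fun_affine:
  assumes "smooth_fun f"
  shows "smooth_fun (\<lambda>x. f (a * x + b))"
proof (rule smooth_funI_coinduct[where P = "\<lambda>g. \<exists>c h. smooth_fun h \<and> (\<forall>x. g x = c *\<^sub>R h (a * x + b))"])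
  show "\<exists>c h. smooth_fun h \<and> (\<forall>x. f (a * x + b) = c *\<^sub>R h (a * x + b))"
    using assms by (intro exI[of _ 1] exI[of _ f]) simp
next
  fix g
  assume "\<exists>c h. smooth_fun h \<and> (\<forall>x. g x = c *\<^sub>R h (a * x + b))"
  then obtain c h where h: "smooth_fun h" and g: "\<And>x. g x = c *\<^sub>R h (a * x + b)"
    by blast
  then have g_eq: "g = (\<lambda>x. c *\<^sub>R h (a * x + b))"
    by (simp add: fun_eq_iff)
  obtain h' where h': "\<And>x. (h has_vector_derivative h' x) (at x)" "smooth_fun h'"
    using smooth_fun_derivative[OF h] by blast
  define g' where "g' x = (c * a) *\<^sub>R h' (a * x + b)" for x
  have "(g has_vector_derivative g' x) (at x)" for x
  proof -
    have "((\<lambda>x. a * x + b) has_vector_derivative a) (at x)"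
      by (auto intro!: derivative_eq_intros simp flip: has_real_derivative_iff_has_vector_derivative)
    from vector_diff_chain_at[OF this h'(1)]
    have "((\<lambda>x. c *\<^sub>R (h \<circ> (\<lambda>x. a * x + b)) x) has_vector_derivative c *\<^sub>R (a *\<^sub>R h' (a * x + b))) (at x)"
      by (rule bounded_linear.has_vector_derivative[OF bounded_linear_scaleR_right])
    then show ?thesis by (simp add: g_eq g'_def o_def)
  qed
  moreover have "\<exists>c h. smooth_fun h \<and> (\<forall>x. g' x = c *\<^sub>R h (a * x + b))"
    using h'(2) unfolding g'_def by blast
  ultimately show "\<exists>g'. (\<forall>x. (g has_vector_derivative g' x) (at x)) \<and>
      (\<exists>c h. smooth_fun h \<and> (\<forall>x. g' x = c *\<^sub>R h (a * x + b)))"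
    by blast
qed

section \<open>Test functions\<close>

text \<open>flat_fun n is the n-th derivative of the smooth function that vanishes on the
  non-positive reals and equals exp (-1/t) for t > 0.\<close>

fun flat_poly :: "nat \<Rightarrow> real poly" where
  "flat_poly 0 = 1"
| "flat_poly (Suc n) = [:0, 0, 1:] * (flat_poly n - pderiv (flat_poly n))"

definition flat_fun :: "nat \<Rightarrow> real \<Rightarrow> real" where
  "flat_fun n t = (if 0 < t then poly (flat_poly n) (1 / t) * exp (- 1 / t) else 0)"

lemma flat_fun_0: "flat_fun 0 t = (if 0 < t then exp (- 1 / t) else 0)"
  by (simp add: flat_fun_def)

lemma tendsto_power_poly_exp_at_top: "((\<lambda>u. u ^ k * poly p u * exp (- u)) \<longlongrightarrow> (0::real)) at_top"
proof (induction p arbitrary: k)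
  case (pCons a p)
  have "((\<lambda>u. a * (u ^ k / exp u) + u ^ Suc k * poly p u * exp (- u)) \<longlongrightarrow> a * 0 + 0) at_top"
    by (intro tendsto_add tendsto_mult tendsto_const tendsto_power_div_exp_0 pCons.IH)
  then show ?case
    by (simp add: exp_minus field_simps)
qed simp

lemma flat_fun_has_derivative_at_0: "(flat_fun n has_real_derivative flat_fun (Suc n) 0) (at 0)"
proof -
  have "((\<lambda>t. flat_fun n t / t) \<longlongrightarrow> 0) (at_left 0)"
  proof (rule Lim_transform_eventually[OF tendsto_const])
    show "\<forall>\<^sub>F t in at_left 0. 0 = flat_fun n t / t"
      by (simp add: eventually_at_filter flat_fun_def)
  qed
  moreover have "((\<lambda>t. flat_fun n t / t) \<longlongrightarrow> 0) (at_right 0)"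
    unfolding at_right_to_top filterlim_filtermap
  proof (rule Lim_transform_eventually[OF tendsto_power_poly_exp_at_top[of 1 "flat_poly n"]])
    show "\<forall>\<^sub>F u in at_top. u ^ 1 * poly (flat_poly n) u * exp (- u) = flat_fun n (inverse u) / inverse u"
      using eventually_gt_at_top[of 0] by eventually_elim (simp add: flat_fun_def field_simps)
  qed
  ultimately have "((\<lambda>t. flat_fun n t / t) \<longlongrightarrow> 0) (at 0)"
    by (rule filterlim_split_at)
  then show ?thesis
    unfolding has_field_derivative_iff by (simp add: flat_fun_def)
qed

lemma flat_fun_has_derivative: "(flat_fun n has_real_derivative flat_fun (Suc n) t) (at t)"
proof (cases t "0 :: real" rule: linorder_cases)
  case less
  have "((\<lambda>t. 0) has_real_derivative flat_fun (Suc n) t) (at t)"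
    using less by (simp add: flat_fun_def)
  then show ?thesis
    by (rule has_field_derivative_transform_within_open[where S = "{..<0}"])
      (use less in \<open>simp_all add: flat_fun_def\<close>)
next
  case equal
  then show ?thesis by (simp add: flat_fun_has_derivative_at_0)
next
  case greater
  let ?p = "flat_poly n"
  have "((\<lambda>t. poly ?p (1 / t) * exp (- 1 / t)) has_real_derivative
      poly (pderiv ?p) (1 / t) * (- 1 / t\<^sup>2) * exp (- 1 / t) + poly ?p (1 / t) * (exp (- 1 / t) * (1 / t\<^sup>2))) (at t)"
    using greater by (auto intro!: derivative_eq_intros DERIV_chain2[OF poly_DERIV] simp: power2_eq_square)
  also have "poly (pderiv ?p) (1 / t) * (- 1 / t\<^sup>2) * exp (- 1 / t) + poly ?p (1 / t) * (exp (- 1 / t) * (1 / t\<^sup>2))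
      = flat_fun (Suc n) t"
    using greater by (simp add: flat_fun_def poly_mult power2_eq_square field_simps)
  finally show ?thesis
    by (rule has_field_derivative_transform_within_open[where S = "{0<..}"])
      (use greater in \<open>simp_all add: flat_fun_def\<close>)
qed

lemma smooth_fun_flat: "smooth_fun (\<lambda>t. complex_of_real (flat_fun 0 t))"
  unfolding smooth_fun_def
  by (intro exI[of _ "\<lambda>n t. complex_of_real (flat_fun n t)"] conjI allI
      has_vector_derivative_of_real flat_fun_has_derivative) simp

lemma test_fun_iff_bounded: "test_fun \<phi> \<longleftrightarrow> smooth_fun \<phi> \<and> bounded {x. \<phi> x \<noteq> 0}"
  by (simp add: test_fun_def)

lemma test_fun_mult_smooth:
  assumes "smooth_fun h" and "test_fun \<phi>"
  shows "test_fun (\<lambda>x. h x * \<phi> x)"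
proof -
  have "{x. h x * \<phi> x \<noteq> 0} \<subseteq> {x. \<phi> x \<noteq> 0}"
    by auto
  with assms show ?thesis
    by (auto simp: test_fun_iff_bounded intro: smooth_fun_mult bounded_subset)
qed

lemma test_fun_divide_resolvent:
  assumes "test_fun \<phi>" and "Im z \<noteq> 0"
  shows "test_fun (\<lambda>\<xi>. \<phi> \<xi> / (z - complex_of_real \<xi>))"
proof -
  have "z - complex_of_real \<xi> \<noteq> 0" for \<xi>
    using assms(2) by (metis Im_complex_of_real eq_iff_diff_eq_0)
  then have "smooth_fun (\<lambda>\<xi>. inverse (z + (- 1) * complex_of_real \<xi>))"
    by (intro smooth_fun_inverse smooth_fun_add smooth_fun_mult smooth_fun_const smooth_fun_of_real) simp
  from test_fun_mult_smooth[OF this assms(1)] show ?thesis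
    by (simp add: divide_inverse mult.commute)
qed

text \<open>The plateau function is inner / (inner + outer): inner is positive exactly on
  (-R-1, R+1), and outer vanishes on [-R, R] and is positive outside, so the denominator never
  vanishes.\<close>

lemma test_fun_plateau:
  assumes "bounded K"
  obtains \<psi> where "test_fun \<psi>" and "\<And>x. x \<in> K \<Longrightarrow> \<psi> x = 1"
proof -
  obtain R where R: "\<And>x. x \<in> K \<Longrightarrow> \<bar>x\<bar> \<le> R"
    using assms by (auto simp: bounded_iff)
  define inner where "inner x = flat_fun 0 (x + (R + 1)) * flat_fun 0 (R + 1 - x)" for x
  define outer where "outer x = flat_fun 0 (x - R) + flat_fun 0 (- x - R)" for x
  have inner_pos_iff: "0 < inner x \<longleftrightarrow> \<bar>x\<bar> < R + 1" for x
    by (auto simp: inner_def flat_fun_0 zero_less_mult_iff)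
  have inner_nonneg: "0 \<le> inner x" and outer_nonneg: "0 \<le> outer x" for x
    by (simp_all add: inner_def outer_def flat_fun_0)
  have "0 < inner x + outer x" for x
  proof (cases "\<bar>x\<bar> < R + 1")
    case True
    with inner_pos_iff[of x] outer_nonneg[of x] show ?thesis by linarith
  next
    case False
    then have "0 < outer x"
      by (auto simp: outer_def flat_fun_0 add_pos_nonneg add_nonneg_pos)
    with inner_nonneg[of x] show ?thesis by linarith
  qed
  then have nonzero: "complex_of_real (inner x) + complex_of_real (outer x) \<noteq> 0" for x
    by (metis less_irrefl of_real_add of_real_eq_0_iff)
  define \<psi> where
    "\<psi> x = complex_of_real (inner x) * inverse (complex_of_real (inner x) + complex_of_real (outer x))" for x
  have flat_affine: "smooth_fun (\<lambda>x. complex_of_real (flat_fun 0 (a * x + b)))" for a b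
    by (rule smooth_fun_affine[OF smooth_fun_flat])
  have "smooth_fun (\<lambda>x. complex_of_real (inner x))"
    using smooth_fun_mult[OF flat_affine[of 1 "R + 1"] flat_affine[of "- 1" "R + 1"]]
    by (simp add: inner_def algebra_simps)
  moreover have "smooth_fun (\<lambda>x. complex_of_real (outer x))"
    using smooth_fun_add[OF flat_affine[of 1 "- R"] flat_affine[of "- 1" "- R"]]
    by (simp add: outer_def algebra_simps)
  ultimately have "smooth_fun \<psi>"
    unfolding \<psi>_def by (intro smooth_fun_mult smooth_fun_inverse smooth_fun_add nonzero)
  moreover have "bounded {x. \<psi> x \<noteq> 0}"
  proof (rule bounded_subset[OF compact_imp_bounded[OF compact_Icc]], intro subsetI)
    fix x
    assume "x \<in> {x. \<psi> x \<noteq> 0}"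
    then have "inner x \<noteq> 0"
      by (auto simp: \<psi>_def)
    with inner_nonneg[of x] inner_pos_iff[of x] show "x \<in> {- (R + 1)..R + 1}"
      by auto
  qed
  ultimately have "test_fun \<psi>"
    by (simp add: test_fun_iff_bounded)
  moreover have "\<psi> x = 1" if "x \<in> K" for x
  proof -
    have "outer x = 0" and "0 < inner x"
      using R[OF that] inner_pos_iff[of x] by (auto simp: outer_def flat_fun_0)
    then show ?thesis by (simp add: \<psi>_def)
  qed
  ultimately show ?thesis using that by blast
qed

section \<open>The resolvent identity implies holomorphy\<close>

context
  fixes cm :: "complex \<Rightarrow> 'a::banach \<Rightarrow> 'a"
  assumes cs: "complex_structure cm"
begin

lemma complex_structure_one: "cm 1 x = x"
  and complex_structure_mult: "cm (a * b) x = cm a (cm b x)"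
  and complex_structure_add_right: "cm a (x + y) = cm a x + cm a y"
  and complex_structure_of_real: "cm (complex_of_real r) x = r *\<^sub>R x"
  and complex_structure_norm: "norm (cm a x) = cmod a * norm x"
  using cs unfolding complex_structure_def by blast+

lemma complex_structure_scaleR: "cm c (r *\<^sub>R x) = r *\<^sub>R cm c x"
proof -
  have "cm c (r *\<^sub>R x) = cm (c * complex_of_real r) x"
    by (simp add: complex_structure_mult complex_structure_of_real)
  also have "\<dots> = r *\<^sub>R cm c x"
    by (simp only: mult.commute[of c] complex_structure_mult complex_structure_of_real)
  finally show ?thesis .
qed

lemma complex_structure_minus: "cm c (- x) = - cm c x"
  using complex_structure_scaleR[of c "- 1" x] by simp

lemma bounded_linear_complex_structure_blinfun: "bounded_linear (\<lambda>x. cm c (blinfun_apply T x))"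
proof (rule bounded_linear_intro[where K = "cmod c * norm T"])
  show "norm (cm c (blinfun_apply T x)) \<le> norm x * (cmod c * norm T)" for x
    using norm_blinfun[of T x]
    by (simp add: complex_structure_norm) (metis mult.commute mult.left_commute mult_left_mono norm_ge_zero)
qed (simp_all add: blinfun.add_right blinfun.scaleR_right complex_structure_add_right
    complex_structure_scaleR)

lemma op_scale_apply: "blinfun_apply (op_scale cm c T) x = cm c (blinfun_apply T x)"
  unfolding op_scale_def
  by (simp add: bounded_linear_Blinfun_apply[OF bounded_linear_complex_structure_blinfun])

lemma norm_op_scale_le: "norm (op_scale cm c T) \<le> cmod c * norm T"
proof (rule norm_blinfun_bound)
  show "norm (blinfun_apply (op_scale cm c T) x) \<le> cmod c * norm T * norm x" for x
    using norm_blinfun[of T x]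
    by (simp add: op_scale_apply complex_structure_norm mult.assoc mult_left_mono)
qed simp

lemma op_scale_op_scale: "op_scale cm a (op_scale cm b T) = op_scale cm (a * b) T"
  by (rule blinfun_eqI) (simp add: op_scale_apply complex_structure_mult)

lemma op_scale_one: "op_scale cm 1 T = T"
  by (rule blinfun_eqI) (simp add: op_scale_apply complex_structure_one)

lemma op_scale_minus: "op_scale cm c (- T) = - op_scale cm c T"
  by (rule blinfun_eqI) (simp add: op_scale_apply complex_structure_minus blinfun.minus_left)

lemma perturbation_norm_le:
  assumes "S = T + op_scale cm c (G o\<^sub>L T)" and small: "cmod c * norm G \<le> 1 / 2"
  shows "norm (T - S) \<le> 2 * (cmod c * norm G) * norm S"
proof -
  have diff: "norm (T - S) \<le> cmod c * norm G * norm T"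
  proof -
    have "norm (T - S) = norm (op_scale cm c (G o\<^sub>L T))"
      using assms(1) by (simp add: norm_minus_commute)
    also have "\<dots> \<le> cmod c * norm (G o\<^sub>L T)"
      by (rule norm_op_scale_le)
    also have "\<dots> \<le> cmod c * norm G * norm T"
      by (simp add: mult.assoc mult_left_mono norm_blinfun_compose)
    finally show ?thesis .
  qed
  have "norm T \<le> norm S + norm (T - S)"
    by (simp add: norm_triangle_sub)
  also have "\<dots> \<le> norm S + 1 / 2 * norm T"
    using diff mult_right_mono[OF small norm_ge_zero[of T]] by linarith
  finally have "norm T \<le> 2 * norm S"
    by simp
  note diff
  also have "cmod c * norm G * norm T \<le> cmod c * norm G * (2 * norm S)"
    using \<open>norm T \<le> 2 * norm S\<close> by (simp add: mult_left_mono)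
  finally show ?thesis
    by (simp only: mult_ac)
qed

lemma tendsto_if_resolvent_identity:
  assumes "\<And>w. w \<in> S \<Longrightarrow> F z = F w + op_scale cm (w - z) (G o\<^sub>L F w)"
  shows "(F \<longlongrightarrow> F z) (at z within S)"
proof -
  have "((\<lambda>w. w - z) \<longlongrightarrow> z - z) (at z within S)"
    by (intro tendsto_diff tendsto_ident_at tendsto_const)
  then have "((\<lambda>w. cmod (w - z) * norm G) \<longlongrightarrow> 0 * norm G) (at z within S)"
    by (intro tendsto_mult tendsto_const) (simp add: tendsto_norm_zero)
  then have dist_to_0: "((\<lambda>w. cmod (w - z) * norm G) \<longlongrightarrow> 0) (at z within S)"
    by simp
  then have "\<forall>\<^sub>F w in at z within S. cmod (w - z) * norm G < 1 / 2"
    by (rule order_tendstoD(2)) simp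
  moreover have "\<forall>\<^sub>F w in at z within S. w \<in> S"
    by (simp add: eventually_at_filter)
  ultimately have "\<forall>\<^sub>F w in at z within S. norm (F w - F z) \<le> 2 * (cmod (w - z) * norm G) * norm (F z)"
    by eventually_elim (rule perturbation_norm_le[OF assms], simp_all)
  moreover have "((\<lambda>w. 2 * (cmod (w - z) * norm G) * norm (F z)) \<longlongrightarrow> 0) (at z within S)"
    using tendsto_mult[OF tendsto_mult[OF tendsto_const dist_to_0] tendsto_const] by simp
  ultimately have "((\<lambda>w. F w - F z) \<longlongrightarrow> 0) (at z within S)"
    by (rule Lim_null_comparison)
  then show ?thesis
    by (rule Lim_null[THEN iffD2])
qed

lemma op_holomorphic_on_if_resolvent_identity:
  assumes resolvent: "\<And>z w. z \<in> S \<Longrightarrow> w \<in> S \<Longrightarrow> F z = F w + op_scale cm (w - z) (G z o\<^sub>L F w)"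
  shows "op_holomorphic_on cm F S"
  unfolding op_holomorphic_on_def
proof
  fix z
  assume "z \<in> S"
  have "((\<lambda>w. - (G z o\<^sub>L F w)) \<longlongrightarrow> - (G z o\<^sub>L F z)) (at z within S)"
    using tendsto_if_resolvent_identity[OF resolvent[OF \<open>z \<in> S\<close>]]
    by (intro tendsto_minus bounded_bilinear.tendsto[OF bounded_bilinear_blinfun_compose] tendsto_const)
  moreover have "\<forall>\<^sub>F w in at z within S.
      - (G z o\<^sub>L F w) = op_scale cm (1 / (w - z)) (F w - F z)"
  proof -
    have "\<forall>\<^sub>F w in at z within S. w \<noteq> z \<and> w \<in> S"
      by (simp add: eventually_at_filter)
    then show ?thesis
    proof eventually_elim
      case (elim w)
      then have "F z = F w + op_scale cm (w - z) (G z o\<^sub>L F w)"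
        using resolvent[OF \<open>z \<in> S\<close>] by blast
      then have "F w - F z = - op_scale cm (w - z) (G z o\<^sub>L F w)"
        by simp
      then have "op_scale cm (1 / (w - z)) (F w - F z) = - op_scale cm (1 / (w - z) * (w - z)) (G z o\<^sub>L F w)"
        by (simp only: op_scale_minus op_scale_op_scale)
      with elim show ?case
        by (simp add: op_scale_one)
    qed
  qed
  ultimately have "((\<lambda>w. op_scale cm (1 / (w - z)) (F w - F z)) \<longlongrightarrow> - (G z o\<^sub>L F z)) (at z within S)"
    by (rule Lim_transform_eventually)
  then show "\<exists>D. ((\<lambda>w. op_scale cm (1 / (w - z)) (F w - F z)) \<longlongrightarrow> D) (at z within S)"
    by blast
qed

end

section \<open>Multiplicative maps on test functions\<close>

lemma divide_resolvent_identity: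
  fixes z w c p :: complex and x :: real
  assumes "Im z \<noteq> 0" and "Im w \<noteq> 0" and "c \<noteq> 0 \<Longrightarrow> p = 1"
  shows "c / (z - x) = c / (w - x) + (w - z) * (p / (z - x) * (c / (w - x)))"
proof (cases "c = 0")
  case False
  have field_identity: "c / a = c / b + (b - a) * (1 / a * (c / b))" if "a \<noteq> 0" "b \<noteq> 0" for a b
    using that by (simp add: field_simps)
  have "z - x \<noteq> 0" and "w - x \<noteq> 0"
    using assms(1,2) by (metis Im_complex_of_real eq_iff_diff_eq_0)+
  from field_identity[OF this]
  have "c / (z - x) = c / (w - x) + ((w - x) - (z - x)) * (1 / (z - x) * (c / (w - x)))" .
  moreover have "(w - x) - (z - x) = w - z"
    by simp
  ultimately show ?thesis
    using assms(3)[OF False] by (simp only:)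
qed simp

theorem lemma2p1:
  fixes cm :: "complex \<Rightarrow> 'a::banach \<Rightarrow> 'a"
    and A :: "(real \<Rightarrow> complex) \<Rightarrow> ('a \<Rightarrow>\<^sub>L 'a)"
    and ch :: "real \<Rightarrow> complex"
  assumes cs: "complex_structure cm"
    and range: "\<And>\<phi>. test_fun \<phi> \<Longrightarrow> A \<phi> \<in> bounded_ops cm"
    and add: "\<And>\<phi> \<psi>. test_fun \<phi> \<Longrightarrow> test_fun \<psi> \<Longrightarrow> A (\<lambda>\<xi>. \<phi> \<xi> + \<psi> \<xi>) = A \<phi> + A \<psi>"
    and scale: "\<And>c \<phi>. test_fun \<phi> \<Longrightarrow> A (\<lambda>\<xi>. c * \<phi> \<xi>) = op_scale cm c (A \<phi>)"
    and mult: "\<And>\<phi> \<psi>. test_fun \<phi> \<Longrightarrow> test_fun \<psi> \<Longrightarrow> A (\<lambda>\<xi>. \<phi> \<xi> * \<psi> \<xi>) = A \<phi> o\<^sub>L A \<psi>"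
    and chi: "test_fun ch"
  shows "op_holomorphic_on cm (\<lambda>z. A (\<lambda>\<xi>. ch \<xi> / (z - complex_of_real \<xi>))) {z. Im z \<noteq> 0}"
proof -
  have "bounded {x. ch x \<noteq> 0}"
    using chi by (simp add: test_fun_iff_bounded)
  then obtain \<psi> where \<psi>: "test_fun \<psi>" "\<And>x. ch x \<noteq> 0 \<Longrightarrow> \<psi> x = 1"
    by (rule test_fun_plateau) blast
  define f where "f z = (\<lambda>\<xi>. ch \<xi> / (z - complex_of_real \<xi>))" for z
  define g where "g z = (\<lambda>\<xi>. \<psi> \<xi> / (z - complex_of_real \<xi>))" for z
  have "A (f z) = A (f w) + op_scale cm (w - z) (A (g z) o\<^sub>L A (f w))"
    if "z \<in> {z. Im z \<noteq> 0}" and "w \<in> {z. Im z \<noteq> 0}" for z w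
  proof -
    from that have "Im z \<noteq> 0" and "Im w \<noteq> 0"
      by simp_all
    have f: "test_fun (f w)" and g: "test_fun (g z)"
      unfolding f_def g_def using \<open>Im z \<noteq> 0\<close> \<open>Im w \<noteq> 0\<close> chi \<psi>(1)
      by (simp_all add: test_fun_divide_resolvent)
    then have gf: "test_fun (\<lambda>\<xi>. g z \<xi> * f w \<xi>)"
      by (intro test_fun_mult_smooth) (simp_all add: test_fun_iff_bounded)
    have "f z = (\<lambda>\<xi>. f w \<xi> + (w - z) * (g z \<xi> * f w \<xi>))"
      unfolding f_def g_def by (intro ext divide_resolvent_identity \<open>Im z \<noteq> 0\<close> \<open>Im w \<noteq> 0\<close> \<psi>(2))
    then have "A (f z) = A (f w) + A (\<lambda>\<xi>. (w - z) * (g z \<xi> * f w \<xi>))"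
      by (simp only: add[OF f test_fun_mult_smooth[OF smooth_fun_const gf]])
    also have "\<dots> = A (f w) + op_scale cm (w - z) (A (g z) o\<^sub>L A (f w))"
      by (simp only: scale[OF gf] mult[OF g f])
    finally show ?thesis .
  qed
  then show ?thesis
    unfolding f_def by (rule op_holomorphic_on_if_resolvent_identity[OF cs])
qed

end
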